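(* Let $q=2^m$ with $q\equiv 1\pmod 3$, and let $s=\frac{q^2+q+1}{3}$. Let $c\in\mathbb{F}_{q^2}^*$ satisfy $\mathrm{Tr}_1^m(c^{q+1})=0$. Then \[ f(x)=cx+x^s+c^q x^{qs} \] is a permutation polynomial of $\mathbb{F}_{q^2}$.
   Context: For $y\in\mathbb{F}_{2^m}$, $\mathrm{Tr}_1^m(y)=\sum_{i=0}^{m-1}y^{2^i}$ is the absolute trace; note $c^{q+1}\in\mathbb{F}_q$. A polynomial is a permutation polynomial of a finite field if it induces a bijection of that field. *)

theory Defs
  imports Main
begin

text \<open>Absolute trace Tr_1^m(y) = sum_{i=0}^{m-1} y^(2^i), meant for y in F_{2^m}.\<close>
definition abs_trace :: "nat \<Rightarrow> 'a::comm_ring_1 \<Rightarrow> 'a" where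
  "abs_trace m y = (\<Sum>i<m. y ^ (2 ^ i))"

end

theory Submission
  imports Defs "HOL-Number_Theory.Residues"
begin

text \<open>
  Since s (q^2 - q + 1) = 1 mod (q^2 - 1), the map x \<mapsto> x^s permutes F_{q^2}, and
  f(x) = g(x^s) with g(y) = y h(y^(q-1)) and h(z) = 1 + c z^q + c^q z.
  The value h(z) is fixed by the Frobenius x \<mapsto> x^q, so raising g(x) = g(y) to the power q - 1
  gives x^(q-1) = y^(q-1), hence equal h-values and x = y, provided h has no zero on the
  norm-one elements z = y^(q-1). A zero z would make w = c^q z satisfy w^q + w = 1 and
  w^2 + w = c^(q+1), so Tr(c^(q+1)) = Tr(w^2 + w) = w^q + w = 1.
\<close>

lemma power_pred_eq_one:
  fixes y :: "'a::field"
  assumes "y ^ n = y" and "y \<noteq> 0" and "n > 0"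
  shows "y ^ (n - 1) = 1"
proof -
  have "y * y ^ (n - 1) = y * 1"
    using assms by (cases n) simp_all
  then show ?thesis
    using assms(2) by simp
qed

lemma power_card_minus_one_eq_one:
  fixes x :: "'a::{field,finite}"
  assumes "x \<noteq> 0"
  shows "x ^ (card (UNIV :: 'a set) - 1) = 1"
proof -
  let ?U = "UNIV - {0 :: 'a}"
  have "prod id ?U = prod ((*) x) ?U"
    by (rule prod.reindex_bij_witness[of _ "(*) x" "\<lambda>y. y / x"]) (use assms in auto)
  also have "\<dots> = x ^ card ?U * prod id ?U"
    by (simp add: prod.distrib)
  finally have "x ^ card ?U = 1"
    by simp
  then show ?thesis
    by (simp add: card_Diff_singleton)
qed

lemma power_card_eq_self:
  fixes x :: "'a::{field,finite}"
  shows "x ^ card (UNIV :: 'a set) = x"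
proof (cases "x = 0")
  case False
  have "card (UNIV :: 'a set) > 0"
    by (simp add: finite_UNIV_card_ge_0)
  then have "card (UNIV :: 'a set) = Suc (card (UNIV :: 'a set) - 1)"
    by simp
  then show ?thesis
    using power_card_minus_one_eq_one[OF False] by (metis mult.right_neutral power_Suc)
qed (simp add: finite_UNIV_card_ge_0)

lemma power_power_eq_self_if_inverse_exponents:
  fixes x :: "'a::{field,finite}"
  assumes "s * t = 1 + (card (UNIV :: 'a set) - 1) * j"
  shows "(x ^ s) ^ t = x"
proof (cases "x = 0")
  case False
  then show ?thesis
    unfolding power_mult[symmetric] assms
    by (simp only: power_add power_mult power_card_minus_one_eq_one[OF False] power_one
        power_one_right mult_1_right)
qed (use assms in \<open>simp flip: power_mult\<close>)

lemma CHAR_eq_2_if_card_power_of_2: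
  assumes "card (UNIV :: 'a::{field,finite} set) = 2 ^ n"
  shows "CHAR('a) = 2"
proof -
  have "prime CHAR('a)"
    by (simp add: prime_CHAR_semidom finite_imp_CHAR_pos)
  moreover have "CHAR('a) dvd 2 ^ n"
    using CHAR_dvd_CARD[where ?'a = 'a] assms by simp
  ultimately show ?thesis
    by (metis prime_dvd_power primes_dvd_imp_eq two_is_prime_nat)
qed

lemma abs_trace_square_plus_self:
  fixes w :: "'a::comm_ring_1"
  assumes "CHAR('a) = 2"
  shows "abs_trace m (w ^ 2 + w) = w ^ (2 ^ m) + w"
proof (induction m)
  case 0
  show ?case
    using minus_CHAR_2[OF assms, of w w] by (simp add: abs_trace_def)
next
  case (Suc m)
  have "(w ^ 2 + w) ^ (2 ^ m) = w ^ (2 ^ Suc m) + w ^ (2 ^ m)"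
    using freshmans_dream'[of "2 ^ m" m "w ^ 2" w] assms
    by (simp add: power_mult[symmetric] mult.commute)
  then have "abs_trace (Suc m) (w ^ 2 + w) = w ^ (2 ^ Suc m) + w + (w ^ (2 ^ m) + w ^ (2 ^ m))"
    using Suc by (simp add: abs_trace_def algebra_simps)
  also have "w ^ (2 ^ m) + w ^ (2 ^ m) = 0"
    using minus_CHAR_2[OF assms, of "w ^ (2 ^ m)" "w ^ (2 ^ m)"] by simp
  finally show ?case
    by simp
qed

lemma abs_trace_norm_eq_one_if_root:
  fixes c z :: "'a::field"
  assumes char: "CHAR('a) = 2" and q: "q = 2 ^ m"
    and c_conj: "c ^ (q * q) = c" and z_norm: "z * z ^ q = 1"
    and root: "1 + c * z ^ q + c ^ q * z = 0"
  shows "abs_trace m (c ^ (q + 1)) = 1"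
proof -
  define w where "w = c ^ q * z"
  have w_conj: "w ^ q = c * z ^ q"
    using c_conj by (simp add: w_def power_mult_distrib flip: power_mult)
  have "w * w ^ q = c ^ (q + 1) * (z * z ^ q)"
    unfolding w_conj by (simp add: w_def power_add algebra_simps)
  then have w_norm: "w * w ^ q = c ^ (q + 1)"
    using z_norm by simp
  have "w ^ q + w = 1"
    using root minus_CHAR_2[OF char, of "w ^ q + w" 1]
    unfolding w_conj by (simp add: w_def algebra_simps)
  moreover have "w ^ 2 + w = c ^ (q + 1)"
  proof -
    have "w * (1 + w ^ q + w) = 0"
      using root unfolding w_conj by (simp add: w_def algebra_simps)
    then have "w ^ 2 + w + w * w ^ q = 0"
      by (simp add: power2_eq_square algebra_simps)
    then have "w ^ 2 + w + c ^ (q + 1) = 0"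
      unfolding w_norm .
    then show ?thesis
      using minus_CHAR_2[OF char, of "w ^ 2 + w" "c ^ (q + 1)"] by simp
  qed
  ultimately show ?thesis
    using abs_trace_square_plus_self[OF char, of m w] q by simp
qed

lemma inj_mult_fun_of_power:
  fixes H :: "'a::field \<Rightarrow> 'a"
  assumes nonzero: "\<And>y. y \<noteq> 0 \<Longrightarrow> H (y ^ n) \<noteq> 0"
    and root_of_unity: "\<And>y. y \<noteq> 0 \<Longrightarrow> H (y ^ n) ^ n = 1"
  shows "inj (\<lambda>y. y * H (y ^ n))"
proof (rule injI)
  fix x y :: 'a
  assume eq: "x * H (x ^ n) = y * H (y ^ n)"
  show "x = y"
  proof (cases "x = 0 \<or> y = 0")
    case True
    then show ?thesis
      using eq nonzero by (metis mult_eq_0_iff)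
  next
    case False
    then have "x ^ n * H (x ^ n) ^ n = y ^ n * H (y ^ n) ^ n"
      using eq by (metis power_mult_distrib)
    then have "x ^ n = y ^ n"
      using False root_of_unity by simp
    then show ?thesis
      using eq False nonzero by simp
  qed
qed

lemma inj_mult_one_plus_trace_form:
  fixes c :: "'a::field"
  assumes char: "CHAR('a) = 2" and q: "q = 2 ^ m"
    and conj: "\<And>x::'a. x ^ (q * q) = x"
    and tr: "abs_trace m (c ^ (q + 1)) = 0"
  shows "inj (\<lambda>y. y * (1 + c * (y ^ (q - 1)) ^ q + c ^ q * y ^ (q - 1)))"
proof -
  define H where "H t = 1 + c * t ^ q + c ^ q * t" for t
  have "q > 0"
    using q by simp
  have H_nonzero: "H (y ^ (q - 1)) \<noteq> 0" if "y \<noteq> 0" for y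
  proof
    assume "H (y ^ (q - 1)) = 0"
    moreover have "(q - 1) + (q - 1) * q = q * q - 1"
      using \<open>q > 0\<close> by (cases q) simp_all
    then have "y ^ (q - 1) * (y ^ (q - 1)) ^ q = y ^ (q * q - 1)"
      by (metis power_add power_mult)
    ultimately have "abs_trace m (c ^ (q + 1)) = 1"
      using abs_trace_norm_eq_one_if_root[OF char q conj]
        power_pred_eq_one[OF conj that] \<open>q > 0\<close>
      by (simp add: H_def)
    then show False
      using tr by simp
  qed
  have H_conj: "H t ^ q = H t" for t
  proof -
    have frobenius: "(a + b) ^ q = a ^ q + b ^ q" for a b :: 'a
      using freshmans_dream'[of q m a b] char q by simp
    have involution: "(x ^ q) ^ q = x" for x :: 'a
      using conj[of x] by (simp add: power_mult)
    show ?thesis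
      by (simp add: H_def frobenius power_mult_distrib involution algebra_simps)
  qed
  have H_root: "H t ^ (q - 1) = 1" if "H t \<noteq> 0" for t
    using power_pred_eq_one[OF H_conj that] \<open>q > 0\<close> .
  have "inj (\<lambda>y. y * H (y ^ (q - 1)))"
    using H_nonzero H_root by (blast intro: inj_mult_fun_of_power)
  then show ?thesis
    by (simp add: H_def)
qed

lemma exponent_s_inverse:
  fixes q s :: nat
  assumes "q mod 3 = 1" and "s = (q ^ 2 + q + 1) div 3"
  shows "\<exists>j. s * (q * q - q + 1) = 1 + (q * q - 1) * j"
proof -
  obtain k where q: "q = 3 * k + 1"
    using assms(1) by (metis mod_div_mult_eq add.commute mult.commute)
  have "q ^ 2 + q + 1 = 3 * (3 * k ^ 2 + 3 * k + 1)"
    unfolding q by (simp add: power2_eq_square algebra_simps)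
  then have s: "s = 3 * k ^ 2 + 3 * k + 1"
    using assms(2) by simp
  have "q * q - q + 1 = 9 * k ^ 2 + 3 * k + 1" "q * q - 1 = 9 * k ^ 2 + 6 * k"
    unfolding q by (simp_all add: power2_eq_square algebra_simps)
  then have "s * (q * q - q + 1) = 1 + (q * q - 1) * (3 * k ^ 2 + 2 * k + 1)"
    unfolding s by (simp add: power2_eq_square algebra_simps)
  then show ?thesis ..
qed

lemma trinomial_eq_power_mult_form:
  fixes c x :: "'a::comm_ring_1"
  assumes inverse: "(x ^ s) ^ (q * q - q + 1) = x" and "q > 0"
  shows "c * x + x ^ s + c ^ q * x ^ (q * s)
    = x ^ s * (1 + c * ((x ^ s) ^ (q - 1)) ^ q + c ^ q * (x ^ s) ^ (q - 1))"
proof -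
  have e1: "s * (q * q - q + 1) = s + s * (q - 1) * q" and e2: "q * s = s + s * (q - 1)"
    using \<open>q > 0\<close> by (cases q; simp add: algebra_simps)+
  have "x = x ^ (s * (q * q - q + 1))"
    using inverse by (simp only: power_mult)
  also have "\<dots> = x ^ s * ((x ^ s) ^ (q - 1)) ^ q"
    by (simp only: e1 power_add power_mult)
  finally have "x ^ s * ((x ^ s) ^ (q - 1)) ^ q = x" ..
  moreover have "x ^ s * (x ^ s) ^ (q - 1) = x ^ (q * s)"
    by (simp only: e2 power_add power_mult)
  moreover have "x ^ s * (1 + c * ((x ^ s) ^ (q - 1)) ^ q + c ^ q * (x ^ s) ^ (q - 1))
      = x ^ s + c * (x ^ s * ((x ^ s) ^ (q - 1)) ^ q) + c ^ q * (x ^ s * (x ^ s) ^ (q - 1))"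
    by (simp add: algebra_simps)
  ultimately show ?thesis
    by (simp add: algebra_simps)
qed

theorem proposition2:
  fixes m q s :: nat and c :: "'a::{field, finite}"
  assumes q_def: "q = 2 ^ m"
    and card: "card (UNIV :: 'a set) = q ^ 2"
    and q_mod: "q mod 3 = 1"
    and s_def: "s = (q ^ 2 + q + 1) div 3"
    and c_nz: "c \<noteq> 0"
    and tr: "abs_trace m (c ^ (q + 1)) = 0"
  shows "bij (\<lambda>x::'a. c * x + x ^ s + c ^ q * x ^ (q * s))"
proof -
  have char: "CHAR('a) = 2"
    using card q_def by (intro CHAR_eq_2_if_card_power_of_2[of "m * 2"]) (simp add: power_mult)
  have conj: "x ^ (q * q) = x" for x :: 'a
    using power_card_eq_self[of x] card by (simp add: power2_eq_square)
  obtain j where "s * (q * q - q + 1) = 1 + (card (UNIV :: 'a set) - 1) * j"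
    using exponent_s_inverse[OF q_mod s_def] card by (auto simp: power2_eq_square)
  then have s_inverse: "(x ^ s) ^ (q * q - q + 1) = x" for x :: 'a
    by (rule power_power_eq_self_if_inverse_exponents)
  then have "inj (\<lambda>x::'a. x ^ s)"
    by (metis injI)
  moreover have "c * x + x ^ s + c ^ q * x ^ (q * s)
      = x ^ s * (1 + c * ((x ^ s) ^ (q - 1)) ^ q + c ^ q * (x ^ s) ^ (q - 1))" for x :: 'a
    using trinomial_eq_power_mult_form[OF s_inverse] q_def by simp
  ultimately have "inj (\<lambda>x::'a. c * x + x ^ s + c ^ q * x ^ (q * s))"
    using inj_compose[OF inj_mult_one_plus_trace_form[OF char q_def conj tr]] by (simp add: comp_def)
  then show ?thesis
    by (simp add: bij_def finite_UNIV_inj_surj)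
qed

end
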